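(* In the setting described in the context, for the family of output states $|\psi_\theta\rangle=U^n_\theta\cdots U^1_\theta|\psi_{sep}\rangle$ the SLD quantum information $H_\theta$ is attainable: at each $\theta$ there is a POVM $M$ whose Fisher information matrix equals $H_\theta$.
   Context: Let $t_1,\dots,t_{d-1}$ be $d\times d$ matrices with $t_k=t_k^\dagger$, $\mathrm{tr}\{t_k\}=0$, $\mathrm{tr}\{t_kt_l\}=\delta_{kl}$ and $t_kt_l=t_lt_k$; let $\{|w_k\rangle\}$ be a common orthonormal eigenbasis and $|\psi_{sep}\rangle=\frac1{\sqrt d}\sum_{k=1}^d|w_k\rangle$. Let $f_1,\dots,f_n:\mathbb{R}\to\mathbb{R}$ be differentiable with $f_j'>0$ and $0\le\sum_jf_j(\theta_k)\le\pi$. For $\theta=(\theta_1,\dots,\theta_{d-1})$, $U^j_\theta=\exp\bigl(i\sum_{k=1}^{d-1}f_j(\theta_k)t_k\bigr)$. SLD quantum information: $(H_\theta)_{jk}=\mathrm{Re}\,\mathrm{tr}\{\lambda^j\rho_\theta\lambda^k\}$ with $\rho_\theta=|\psi_\theta\rangle\langle\psi_\theta|$ and $\lambda^j$ Hermitian solving $\frac{\partial\rho_\theta}{\partial\theta_j}=\frac12(\rho_\theta\lambda^j+\lambda^j\rho_\theta)$. For a POVM $M=\{M_m\}$ with $p(m;\theta)=\mathrm{tr}\{\rho_\theta M_m\}$, the Fisher information matrix is $\sum_{m:p>0}\frac1{p(m;\theta)}\partial_jp(m;\theta)\partial_kp(m;\theta)$. *)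

theory Defs
  imports "HOL-Analysis.Derivative" "Jordan_Normal_Form.Matrix"
begin

definition cadj :: "complex mat \<Rightarrow> complex mat" where
  "cadj A = mat (dim_col A) (dim_row A) (\<lambda>(i,j). cnj (A $$ (j,i)))"

definition hermitian :: "complex mat \<Rightarrow> bool" where
  "hermitian A \<longleftrightarrow> dim_row A = dim_col A \<and> cadj A = A"

definition mtrace :: "complex mat \<Rightarrow> complex" where
  "mtrace A = (\<Sum>i<dim_row A. A $$ (i,i))"

definition cinner :: "complex vec \<Rightarrow> complex vec \<Rightarrow> complex" where
  "cinner u v = (\<Sum>i<dim_vec u. cnj (u $ i) * v $ i)"

definition mexp :: "complex mat \<Rightarrow> complex mat" where
  "mexp A = mat (dim_row A) (dim_col A)
     (\<lambda>(i,j). \<Sum>k. (A ^\<^sub>m k) $$ (i,j) / of_nat (fact k))"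

definition psd :: "nat \<Rightarrow> complex mat \<Rightarrow> bool" where
  "psd d M \<longleftrightarrow> M \<in> carrier_mat d d \<and> hermitian M \<and>
     (\<forall>v \<in> carrier_vec d. 0 \<le> Re (cinner v (M *\<^sub>v v)))"

definition is_povm :: "nat \<Rightarrow> nat \<Rightarrow> (nat \<Rightarrow> complex mat) \<Rightarrow> bool" where
  "is_povm d N M \<longleftrightarrow> (\<forall>m<N. psd d (M m)) \<and>
     (\<forall>a<d. \<forall>b<d. (\<Sum>m<N. M m $$ (a,b)) = (1\<^sub>m d) $$ (a,b))"

text \<open>Parameters theta_1..theta_{d-1} are encoded as theta k, k < d-1 (0-based);
  generators t_1..t_{d-1} as t k, k < d-1; functions f_1..f_n as f j, j < n.\<close>

definition psi_sep :: "nat \<Rightarrow> (nat \<Rightarrow> complex vec) \<Rightarrow> complex vec" where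
  "psi_sep d w = vec d (\<lambda>i. (\<Sum>a<d. w a $ i) / complex_of_real (sqrt (real d)))"

definition Ugate :: "nat \<Rightarrow> (nat \<Rightarrow> complex mat) \<Rightarrow> (real \<Rightarrow> real) \<Rightarrow> (nat \<Rightarrow> real) \<Rightarrow> complex mat" where
  "Ugate d t fj \<theta> = mexp (mat d d (\<lambda>(a,b). \<i> * (\<Sum>k<d-1. complex_of_real (fj (\<theta> k)) * t k $$ (a,b))))"

fun circuit :: "nat \<Rightarrow> (nat \<Rightarrow> complex mat) \<Rightarrow> (nat \<Rightarrow> real \<Rightarrow> real) \<Rightarrow> nat \<Rightarrow> (nat \<Rightarrow> real) \<Rightarrow> complex mat" where
  "circuit d t f 0 \<theta> = 1\<^sub>m d"
| "circuit d t f (Suc j) \<theta> = Ugate d t (f j) \<theta> * circuit d t f j \<theta>"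

definition psi_out :: "nat \<Rightarrow> nat \<Rightarrow> (nat \<Rightarrow> complex mat) \<Rightarrow> (nat \<Rightarrow> complex vec)
    \<Rightarrow> (nat \<Rightarrow> real \<Rightarrow> real) \<Rightarrow> (nat \<Rightarrow> real) \<Rightarrow> complex vec" where
  "psi_out d n t w f \<theta> = circuit d t f n \<theta> *\<^sub>v psi_sep d w"

definition proj :: "nat \<Rightarrow> complex vec \<Rightarrow> complex mat" where
  "proj d \<psi> = mat d d (\<lambda>(a,b). \<psi> $ a * cnj (\<psi> $ b))"

definition rho_out :: "nat \<Rightarrow> nat \<Rightarrow> (nat \<Rightarrow> complex mat) \<Rightarrow> (nat \<Rightarrow> complex vec)
    \<Rightarrow> (nat \<Rightarrow> real \<Rightarrow> real) \<Rightarrow> (nat \<Rightarrow> real) \<Rightarrow> complex mat" where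
  "rho_out d n t w f \<theta> = proj d (psi_out d n t w f \<theta>)"

definition is_SLD :: "nat \<Rightarrow> nat \<Rightarrow> ((nat \<Rightarrow> real) \<Rightarrow> complex mat) \<Rightarrow> (nat \<Rightarrow> complex mat)
    \<Rightarrow> (nat \<Rightarrow> real) \<Rightarrow> bool" where
  "is_SLD d p \<rho> lam \<theta> \<longleftrightarrow> (\<forall>j<p. lam j \<in> carrier_mat d d \<and> hermitian (lam j) \<and>
     (\<forall>a<d. \<forall>b<d. ((\<lambda>s. \<rho> (\<theta>(j := s)) $$ (a,b)) has_vector_derivative
         ((1/2) * ((\<rho> \<theta> * lam j + lam j * \<rho> \<theta>) $$ (a,b)))) (at (\<theta> j))))"

definition sld_info :: "((nat \<Rightarrow> real) \<Rightarrow> complex mat) \<Rightarrow> (nat \<Rightarrow> complex mat)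
    \<Rightarrow> (nat \<Rightarrow> real) \<Rightarrow> nat \<Rightarrow> nat \<Rightarrow> real" where
  "sld_info \<rho> lam \<theta> j k = Re (mtrace (lam j * \<rho> \<theta> * lam k))"

definition outcome_prob :: "((nat \<Rightarrow> real) \<Rightarrow> complex mat) \<Rightarrow> (nat \<Rightarrow> complex mat)
    \<Rightarrow> nat \<Rightarrow> (nat \<Rightarrow> real) \<Rightarrow> real" where
  "outcome_prob \<rho> M m \<theta> = Re (mtrace (\<rho> \<theta> * M m))"

definition partial_prob :: "((nat \<Rightarrow> real) \<Rightarrow> complex mat) \<Rightarrow> (nat \<Rightarrow> complex mat)
    \<Rightarrow> nat \<Rightarrow> (nat \<Rightarrow> real) \<Rightarrow> nat \<Rightarrow> real" where
  "partial_prob \<rho> M m \<theta> j = deriv (\<lambda>s. outcome_prob \<rho> M m (\<theta>(j := s))) (\<theta> j)"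

definition fisher_info :: "((nat \<Rightarrow> real) \<Rightarrow> complex mat) \<Rightarrow> nat \<Rightarrow> (nat \<Rightarrow> complex mat)
    \<Rightarrow> (nat \<Rightarrow> real) \<Rightarrow> nat \<Rightarrow> nat \<Rightarrow> real" where
  "fisher_info \<rho> N M \<theta> j k =
     (\<Sum>m\<in>{m. m < N \<and> outcome_prob \<rho> M m \<theta> > 0}.
        partial_prob \<rho> M m \<theta> j * partial_prob \<rho> M m \<theta> k / outcome_prob \<rho> M m \<theta>)"

end

theory Submission
  imports Defs "Jordan_Normal_Form.Determinant"
begin

text \<open>All generators are diagonal in the common eigenbasis \<open>w a\<close> with real eigenvalues \<open>\<tau>\<^sub>k(a)\<close>,
  and the hypotheses on the \<open>t k\<close> say that the matrix with rows \<open>1/\<surd>d, \<tau>\<^sub>1, \<dots>, \<tau>\<^sub>d\<^sub>-\<^sub>1\<close> is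
  orthogonal. So the circuit only multiplies each \<open>w a\<close> by a phase: \<open>\<psi> = \<Sum>\<^sub>a c\<^sub>a w\<^sub>a\<close> with
  \<open>|c\<^sub>a|\<^sup>2 = 1/d\<close>, and \<open>\<partial>\<^sub>j\<psi> = \<i> g\<^sub>j \<xi>\<^sub>j\<close> with \<open>g\<^sub>j = \<Sum>\<^sub>i f\<^sub>i'(\<theta>\<^sub>j)\<close> and \<open>\<xi>\<^sub>j = \<Sum>\<^sub>a \<tau>\<^sub>j(a) c\<^sub>a w\<^sub>a\<close>.
  The \<open>\<xi>\<^sub>j\<close> are orthogonal to \<open>\<psi>\<close> and to each other with squared norm \<open>1/d\<close>; for a pure state
  this forces \<open>\<lambda>\<^sup>j \<psi> = 2\<i> g\<^sub>j \<xi>\<^sub>j\<close> for every SLD, hence \<open>H = (4 g\<^sub>j g\<^sub>k \<delta>\<^sub>j\<^sub>k / d)\<close>.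
  The measurement with the \<open>2(d-1)\<close> elements \<open>(1/2) |e\<rangle>\<langle>e|\<close>, \<open>e = \<Sum>\<^sub>a (\<beta> \<plusminus> \<i>\<surd>d \<tau>\<^sub>l(a)) c\<^sub>a w\<^sub>a\<close>,
  \<open>\<beta> = 1/\<surd>(d-1)\<close>, resolves the identity by the same orthogonality, gives every outcome probability
  \<open>\<beta>\<^sup>2/2\<close>, and the derivatives \<open>\<plusminus>\<delta>\<^sub>l\<^sub>j g\<^sub>j \<beta>/\<surd>d\<close>; its Fisher information is exactly \<open>H\<close>.\<close>

lemma index_mult_mat_sum:
  assumes "A \<in> carrier_mat n m" "B \<in> carrier_mat m p" "i < n" "j < p"
  shows "(A * B) $$ (i,j) = (\<Sum>k<m. A $$ (i,k) * B $$ (k,j))"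
  using assms by (auto simp: scalar_prod_def atLeast0LessThan intro!: sum.cong)

lemma index_mult_mat_vec_sum:
  assumes "A \<in> carrier_mat n m" "v \<in> carrier_vec m" "i < n"
  shows "(A *\<^sub>v v) $ i = (\<Sum>k<m. A $$ (i,k) * v $ k)"
  using assms by (auto simp: scalar_prod_def atLeast0LessThan intro!: sum.cong)

lemma hermitian_index_cnj:
  assumes "hermitian A" "A \<in> carrier_mat n n" "i < n" "j < n"
  shows "A $$ (i,j) = cnj (A $$ (j,i))"
proof -
  have "A $$ (i,j) = cadj A $$ (i,j)" using assms unfolding hermitian_def by simp
  also have "\<dots> = cnj (A $$ (j,i))" using assms unfolding cadj_def by simp
  finally show ?thesis .
qed

lemma mtrace_mult_sum:
  assumes "A \<in> carrier_mat d d" "B \<in> carrier_mat d d"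
  shows "mtrace (A * B) = (\<Sum>x<d. \<Sum>y<d. A $$ (x,y) * B $$ (y,x))"
proof -
  have "mtrace (A * B) = (\<Sum>x<d. (A * B) $$ (x,x))" unfolding mtrace_def using assms by simp
  also have "\<dots> = (\<Sum>x<d. \<Sum>y<d. A $$ (x,y) * B $$ (y,x))"
    using assms by (intro sum.cong refl index_mult_mat_sum) auto
  finally show ?thesis .
qed

lemma cinner_smult_right: "dim_vec v = dim_vec u \<Longrightarrow> cinner u (c \<cdot>\<^sub>v v) = c * cinner u v"
  unfolding cinner_def by (simp add: sum_distrib_left ac_simps)

lemma cinner_hermitian_real:
  assumes "hermitian A" "A \<in> carrier_mat d d" "v \<in> carrier_vec d"
  shows "cnj (cinner v (A *\<^sub>v v)) = cinner v (A *\<^sub>v v)"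
proof -
  have "cinner v (A *\<^sub>v v) = (\<Sum>x<d. \<Sum>y<d. cnj (v $ x) * A $$ (x,y) * v $ y)"
    unfolding cinner_def using assms
    by (auto intro!: sum.cong simp del: index_mult_mat_vec
        simp: index_mult_mat_vec_sum sum_distrib_left ac_simps)
  moreover have "cnj (\<Sum>x<d. \<Sum>y<d. cnj (v $ x) * A $$ (x,y) * v $ y)
      = (\<Sum>y<d. \<Sum>x<d. cnj (v $ y) * A $$ (y,x) * v $ x)"
  proof -
    have "cnj (A $$ (x,y)) = A $$ (y,x)" if "x < d" "y < d" for x y
      using hermitian_index_cnj[OF assms(1,2) that(2,1)] by simp
    then show ?thesis by (subst sum.swap) (auto intro!: sum.cong simp: ac_simps)
  qed
  ultimately show ?thesis by simp
qed

lemma psd_one_mat: "psd d (1\<^sub>m d)"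
  unfolding psd_def
proof (intro conjI ballI)
  show "hermitian (1\<^sub>m d :: complex mat)"
    unfolding hermitian_def cadj_def by (auto intro!: eq_matI)
  fix v :: "complex vec" assume "v \<in> carrier_vec d"
  then have "cinner v (1\<^sub>m d *\<^sub>v v) = (\<Sum>x<d. cnj (v $ x) * v $ x)"
    unfolding cinner_def by auto
  then show "0 \<le> Re (cinner v (1\<^sub>m d *\<^sub>v v))"
    by (auto simp: Re_sum intro!: sum_nonneg)
qed simp

text \<open>Orthonormal columns of a square matrix are also orthonormal rows, since a left inverse
  is a right inverse.\<close>
lemma orthonormal_family_resolves_identity:
  fixes V :: "nat \<Rightarrow> complex vec"
  assumes car: "\<forall>a<d. V a \<in> carrier_vec d"
    and orth: "\<forall>a<d. \<forall>b<d. cinner (V a) (V b) = (if a = b then 1 else 0)"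
    and xy: "x < d" "y < d"
  shows "(\<Sum>a<d. V a $ x * cnj (V a $ y)) = (if x = y then 1 else 0)"
proof -
  define W where "W = mat d d (\<lambda>(x,a). V a $ x)"
  define Wh where "Wh = mat d d (\<lambda>(a,x). cnj (V a $ x))"
  have W: "W \<in> carrier_mat d d" and Wh: "Wh \<in> carrier_mat d d" unfolding W_def Wh_def by auto
  have "Wh * W = 1\<^sub>m d"
  proof (rule eq_matI)
    fix i j assume ij: "i < dim_row (1\<^sub>m d)" "j < dim_col (1\<^sub>m d)"
    have "(Wh * W) $$ (i,j) = cinner (V i) (V j)"
      unfolding cinner_def using car ij
      by (subst index_mult_mat_sum[OF Wh W]) (auto simp: W_def Wh_def)
    then show "(Wh * W) $$ (i,j) = 1\<^sub>m d $$ (i,j)" using orth ij by auto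
  qed (auto simp: W_def Wh_def)
  then have "W * Wh = 1\<^sub>m d" using mat_mult_left_right_inverse[OF Wh W] by simp
  moreover have "(W * Wh) $$ (x,y) = (\<Sum>a<d. V a $ x * cnj (V a $ y))"
    using xy by (subst index_mult_mat_sum[OF W Wh]) (auto simp: W_def Wh_def)
  ultimately show ?thesis using xy by simp
qed

lemma sum_delta_mult: "x < (d::nat) \<Longrightarrow> (\<Sum>y<d. (if x = y then 1 else 0) * g y) = (g x :: 'a::semiring_1)"
  by (simp add: if_distrib if_distribR cong: if_cong)

lemma sum_lessThan_double: "(\<Sum>m<2*(N::nat). F m) = (\<Sum>k<N. F (2*k) + F (2*k+1))"
  by (induction N) (simp_all add: algebra_simps)

lemma has_real_derivative_Re_mtrace_mult:
  assumes R: "\<And>s. R s \<in> carrier_mat d d" and M: "M \<in> carrier_mat d d"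
    and D: "\<And>x y. x < d \<Longrightarrow> y < d \<Longrightarrow> ((\<lambda>s. R s $$ (x,y)) has_vector_derivative D x y) (at s0)"
  shows "((\<lambda>s. Re (mtrace (R s * M))) has_real_derivative
           Re (\<Sum>x<d. \<Sum>y<d. D x y * M $$ (y,x))) (at s0)"
proof -
  have "((\<lambda>s. \<Sum>x<d. \<Sum>y<d. R s $$ (x,y) * M $$ (y,x)) has_vector_derivative
          (\<Sum>x<d. \<Sum>y<d. D x y * M $$ (y,x))) (at s0)"
    by (intro has_vector_derivative_sum has_vector_derivative_mult_left D) auto
  from bounded_linear.has_vector_derivative[OF bounded_linear_Re this]
  show ?thesis
    unfolding mtrace_mult_sum[OF R M] has_real_derivative_iff_has_vector_derivative by simp
qed

section \<open>Pure states in coordinates\<close>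

context
  fixes d :: nat
begin

definition braket :: "(nat \<Rightarrow> complex) \<Rightarrow> (nat \<Rightarrow> complex) \<Rightarrow> complex" where
  "braket u v = (\<Sum>x<d. cnj (u x) * v x)"

lemma braket_cnj: "braket u v = cnj (braket v u)"
  unfolding braket_def by (simp add: mult.commute)

lemma braket_scale: "braket (\<lambda>x. c * u x) (\<lambda>x. c' * v x) = cnj c * c' * braket u v"
  unfolding braket_def by (simp add: sum_distrib_left ac_simps)

definition half_projector :: "(nat \<Rightarrow> complex) \<Rightarrow> complex mat" where
  "half_projector e = mat d d (\<lambda>(x,y). e x * cnj (e y) / 2)"

lemma half_projector_carrier: "half_projector e \<in> carrier_mat d d"
  unfolding half_projector_def by simp

lemma psd_half_projector: "psd d (half_projector e)"
  unfolding psd_def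
proof (intro conjI ballI)
  show "half_projector e \<in> carrier_mat d d" by (rule half_projector_carrier)
  show "hermitian (half_projector e)"
    unfolding hermitian_def by (auto simp: half_projector_def cadj_def intro!: eq_matI)
  fix v :: "complex vec" assume v: "v \<in> carrier_vec d"
  define z where "z = (\<Sum>x<d. cnj (v $ x) * e x)"
  have "(half_projector e *\<^sub>v v) $ x = (\<Sum>y<d. e x * cnj (e y) / 2 * v $ y)" if "x < d" for x
    using index_mult_mat_vec_sum[OF half_projector_carrier v that] that
    by (simp add: half_projector_def)
  then have "cinner v (half_projector e *\<^sub>v v)
      = (\<Sum>x<d. \<Sum>y<d. (cnj (v $ x) * e x) * cnj (cnj (v $ y) * e y)) / 2"
    unfolding cinner_def using v
    by (auto intro!: sum.cong simp: sum_distrib_left sum_divide_distrib ac_simps)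
  also have "\<dots> = z * cnj z / 2"
    unfolding z_def by (simp add: sum_product)
  finally have "cinner v (half_projector e *\<^sub>v v) = of_real ((cmod z)\<^sup>2) / 2"
    by (simp only: complex_norm_square)
  then have "Re (cinner v (half_projector e *\<^sub>v v)) = (cmod z)\<^sup>2 / 2"
    by (metis Re_complex_of_real Re_divide_numeral)
  then show "0 \<le> Re (cinner v (half_projector e *\<^sub>v v))"
    using zero_le_power2[of "cmod z"] by linarith
qed

lemma sum_rank_one_half_projector:
  "(\<Sum>x<d. \<Sum>y<d. P x * cnj (Q y) * half_projector e $$ (y,x)) = braket e P * braket Q e / 2"
  unfolding braket_def half_projector_def
  by (auto intro!: sum.cong simp: sum_product sum_divide_distrib ac_simps)

lemma sum_commutator_half_projector:
  "(\<Sum>x<d. \<Sum>y<d. (c * (A x * cnj (B y) - P x * cnj (Q y))) * half_projector e $$ (y,x))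
     = c * (braket e A * braket B e - braket e P * braket Q e) / 2"
proof -
  have "(\<Sum>x<d. \<Sum>y<d. (c * (A x * cnj (B y) - P x * cnj (Q y))) * half_projector e $$ (y,x))
     = c * ((\<Sum>x<d. \<Sum>y<d. A x * cnj (B y) * half_projector e $$ (y,x))
            - (\<Sum>x<d. \<Sum>y<d. P x * cnj (Q y) * half_projector e $$ (y,x)))"
    by (simp add: sum_subtractf sum_distrib_left algebra_simps)
  then show ?thesis by (simp only: sum_rank_one_half_projector) (simp add: algebra_simps)
qed

lemma mtrace_rank_one_mult_half_projector:
  assumes R: "R \<in> carrier_mat d d"
    and R_entry: "\<And>x y. x < d \<Longrightarrow> y < d \<Longrightarrow> R $$ (x,y) = P x * cnj (Q y)"
  shows "mtrace (R * half_projector e) = braket e P * braket Q e / 2"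
  unfolding mtrace_mult_sum[OF R half_projector_carrier] sum_rank_one_half_projector[symmetric]
  by (auto intro!: sum.cong simp: R_entry)

lemma anticommutator_pure_state_apply:
  fixes \<rho> L :: "complex mat" and \<psi> :: "nat \<Rightarrow> complex"
  assumes R: "\<rho> \<in> carrier_mat d d" and L: "L \<in> carrier_mat d d"
    and \<rho>_entry: "\<And>x y. x < d \<Longrightarrow> y < d \<Longrightarrow> \<rho> $$ (x,y) = \<psi> x * cnj (\<psi> y)"
    and \<psi>_norm: "braket \<psi> \<psi> = 1" and x: "x < d"
  shows "(\<Sum>y<d. (1/2) * ((\<rho> * L + L * \<rho>) $$ (x,y)) * \<psi> y)
       = (1/2) * (\<psi> x * braket \<psi> (\<lambda>z. \<Sum>y<d. L $$ (z,y) * \<psi> y) + (\<Sum>y<d. L $$ (x,y) * \<psi> y))"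
proof -
  define u where "u z = (\<Sum>y<d. L $$ (z,y) * \<psi> y)" for z
  have "(\<Sum>y<d. (\<rho> * L) $$ (x,y) * \<psi> y) = (\<Sum>y<d. \<Sum>z<d. \<psi> x * (cnj (\<psi> z) * (L $$ (z,y) * \<psi> y)))"
    by (intro sum.cong refl) (simp add: index_mult_mat_sum[OF R L x] \<rho>_entry x
        sum_distrib_right sum_distrib_left ac_simps)
  also have "\<dots> = (\<Sum>z<d. \<Sum>y<d. \<psi> x * (cnj (\<psi> z) * (L $$ (z,y) * \<psi> y)))"
    by (rule sum.swap)
  also have "\<dots> = \<psi> x * braket \<psi> u"
    unfolding u_def braket_def by (simp only: sum_distrib_left)
  finally have \<rho>L: "(\<Sum>y<d. (\<rho> * L) $$ (x,y) * \<psi> y) = \<psi> x * braket \<psi> u" .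
  have "(\<Sum>y<d. (L * \<rho>) $$ (x,y) * \<psi> y) = (\<Sum>y<d. u x * (cnj (\<psi> y) * \<psi> y))"
    by (intro sum.cong refl) (simp add: index_mult_mat_sum[OF L R x] \<rho>_entry x u_def
        sum_distrib_right sum_distrib_left ac_simps)
  then have L\<rho>: "(\<Sum>y<d. (L * \<rho>) $$ (x,y) * \<psi> y) = u x"
    using \<psi>_norm unfolding braket_def by (simp add: sum_distrib_left[symmetric])
  have "(\<Sum>y<d. (1/2) * ((\<rho> * L + L * \<rho>) $$ (x,y)) * \<psi> y)
      = (\<Sum>y<d. (1/2) * ((\<rho> * L) $$ (x,y) * \<psi> y) + (1/2) * ((L * \<rho>) $$ (x,y) * \<psi> y))"
    using R L x by (intro sum.cong refl) (simp add: algebra_simps)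
  then show ?thesis
    unfolding sum.distrib sum_distrib_left[symmetric] \<rho>L L\<rho> u_def by (simp add: algebra_simps)
qed

text \<open>An SLD of a pure state \<open>\<rho> = |\<psi>\<rangle>\<langle>\<psi>|\<close> is determined on \<open>\<psi>\<close> by the derivative of \<open>\<rho>\<close>:
  pairing the SLD equation with \<open>\<psi>\<close> first forces \<open>\<langle>\<psi>|L\<psi>\<rangle> = 0\<close>.\<close>
lemma sld_apply_pure_state:
  fixes \<rho> L :: "complex mat" and \<psi> \<xi> :: "nat \<Rightarrow> complex" and g :: real
  assumes R: "\<rho> \<in> carrier_mat d d" and L: "L \<in> carrier_mat d d"
    and \<rho>_entry: "\<And>x y. x < d \<Longrightarrow> y < d \<Longrightarrow> \<rho> $$ (x,y) = \<psi> x * cnj (\<psi> y)"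
    and \<psi>_norm: "braket \<psi> \<psi> = 1" and \<xi>_orth: "braket \<psi> \<xi> = 0"
    and SLD: "\<And>x y. x < d \<Longrightarrow> y < d \<Longrightarrow> (1/2) * ((\<rho> * L + L * \<rho>) $$ (x,y))
              = \<i> * of_real g * (\<xi> x * cnj (\<psi> y) - \<psi> x * cnj (\<xi> y))"
    and x: "x < d"
  shows "(\<Sum>y<d. L $$ (x,y) * \<psi> y) = 2 * \<i> * of_real g * \<xi> x"
proof -
  define u where "u x = (\<Sum>y<d. L $$ (x,y) * \<psi> y)" for x
  define q where "q = braket \<psi> u"
  have pair: "\<psi> x * q + u x = 2 * \<i> * of_real g * \<xi> x" if x: "x < d" for x
  proof -
    have "(1/2) * (\<psi> x * q + u x) = (\<Sum>y<d. (1/2) * ((\<rho> * L + L * \<rho>) $$ (x,y)) * \<psi> y)"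
      unfolding q_def u_def by (rule anticommutator_pure_state_apply[OF R L \<rho>_entry \<psi>_norm x, symmetric])
    also have "\<dots> = (\<Sum>y<d. \<i> * of_real g * (\<xi> x * (cnj (\<psi> y) * \<psi> y) - \<psi> x * (cnj (\<xi> y) * \<psi> y)))"
      by (intro sum.cong refl) (subst SLD[OF x], simp_all add: algebra_simps)
    also have "\<dots> = \<i> * of_real g * (\<xi> x * braket \<psi> \<psi> - \<psi> x * braket \<xi> \<psi>)"
      unfolding braket_def by (simp add: sum_distrib_left sum_subtractf algebra_simps)
    also have "\<dots> = \<i> * of_real g * \<xi> x"
      using \<psi>_norm \<xi>_orth braket_cnj[of \<xi> \<psi>] by simp
    finally show ?thesis by simp
  qed
  have "braket \<psi> (\<lambda>x. \<psi> x * q + u x) = braket \<psi> \<psi> * q + q"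
    unfolding braket_def q_def by (simp add: sum.distrib sum_distrib_right algebra_simps)
  also have "braket \<psi> (\<lambda>x. \<psi> x * q + u x) = braket \<psi> (\<lambda>x. 2 * \<i> * of_real g * \<xi> x)"
    unfolding braket_def by (intro sum.cong refl) (simp add: pair)
  also have "\<dots> = 2 * \<i> * of_real g * braket \<psi> \<xi>"
    unfolding braket_def by (simp add: sum_distrib_left ac_simps)
  finally have "q = 0" using \<psi>_norm \<xi>_orth by simp
  with pair[OF x] show ?thesis unfolding u_def by simp
qed

lemma mtrace_sld_pure_state:
  fixes \<rho> Lj Lk :: "complex mat" and \<psi> :: "nat \<Rightarrow> complex"
  assumes R: "\<rho> \<in> carrier_mat d d" and Lj: "Lj \<in> carrier_mat d d" and Lk: "Lk \<in> carrier_mat d d"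
    and Lk_herm: "hermitian Lk"
    and \<rho>_entry: "\<And>x y. x < d \<Longrightarrow> y < d \<Longrightarrow> \<rho> $$ (x,y) = \<psi> x * cnj (\<psi> y)"
    and Lj_\<psi>: "\<And>x. x < d \<Longrightarrow> (\<Sum>y<d. Lj $$ (x,y) * \<psi> y) = uj x"
    and Lk_\<psi>: "\<And>x. x < d \<Longrightarrow> (\<Sum>y<d. Lk $$ (x,y) * \<psi> y) = uk x"
  shows "mtrace (Lj * \<rho> * Lk) = braket uk uj"
proof -
  have Lj\<rho>: "(Lj * \<rho>) $$ (x,z) = uj x * cnj (\<psi> z)" if "x < d" "z < d" for x z
  proof -
    have "(Lj * \<rho>) $$ (x,z) = (\<Sum>y<d. Lj $$ (x,y) * \<psi> y) * cnj (\<psi> z)"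
      using that by (simp add: index_mult_mat_sum[OF Lj R that] \<rho>_entry
          sum_distrib_right sum_distrib_left ac_simps)
    then show ?thesis using Lj_\<psi> that by simp
  qed
  have \<psi>Lk: "(\<Sum>z<d. cnj (\<psi> z) * Lk $$ (z,x)) = cnj (uk x)" if x: "x < d" for x
    using Lk_\<psi>[OF x, symmetric]
    by (simp add: hermitian_index_cnj[OF Lk_herm Lk _ x] mult.commute)
  have "mtrace (Lj * \<rho> * Lk) = (\<Sum>x<d. \<Sum>z<d. (Lj * \<rho>) $$ (x,z) * Lk $$ (z,x))"
    using Lj R by (intro mtrace_mult_sum[OF _ Lk]) auto
  also have "\<dots> = (\<Sum>x<d. uj x * (\<Sum>z<d. cnj (\<psi> z) * Lk $$ (z,x)))"
    by (intro sum.cong refl) (simp del: index_mult_mat add: Lj\<rho> sum_distrib_left ac_simps)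
  finally have "mtrace (Lj * \<rho> * Lk) = (\<Sum>x<d. uj x * (\<Sum>z<d. cnj (\<psi> z) * Lk $$ (z,x)))" .
  then show ?thesis unfolding braket_def by (simp add: \<psi>Lk mult.commute)
qed

end

section \<open>Generators with a common orthonormal eigenbasis\<close>

locale common_eigenbasis =
  fixes d :: nat and t :: "nat \<Rightarrow> complex mat" and w :: "nat \<Rightarrow> complex vec"
  assumes d_pos: "0 < d"
    and t_herm: "\<forall>k<d-1. t k \<in> carrier_mat d d \<and> hermitian (t k) \<and> mtrace (t k) = 0"
    and t_orth: "\<forall>k<d-1. \<forall>l<d-1. mtrace (t k * t l) = (if k = l then 1 else 0)"
    and w_carrier: "\<forall>a<d. w a \<in> carrier_vec d"
    and w_orthonormal: "\<forall>a<d. \<forall>b<d. cinner (w a) (w b) = (if a = b then 1 else 0)"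
    and w_eigen: "\<forall>k<d-1. \<forall>a<d. \<exists>c. t k *\<^sub>v w a = c \<cdot>\<^sub>v w a"
begin

definition eigval :: "nat \<Rightarrow> nat \<Rightarrow> real" where
  "eigval k a = Re (cinner (w a) (t k *\<^sub>v w a))"

lemma dim_w [simp]: "a < d \<Longrightarrow> dim_vec (w a) = d"
  using w_carrier by auto

lemma w_orthonormal_sum:
  "a < d \<Longrightarrow> b < d \<Longrightarrow> (\<Sum>x<d. cnj (w a $ x) * w b $ x) = (if a = b then 1 else 0)"
  using w_orthonormal unfolding cinner_def by auto

lemma w_resolves_identity:
  "x < d \<Longrightarrow> y < d \<Longrightarrow> (\<Sum>a<d. w a $ x * cnj (w a $ y)) = (if x = y then 1 else 0)"
  using orthonormal_family_resolves_identity[OF w_carrier w_orthonormal] by blast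

lemma t_eigvec:
  assumes k: "k < d-1" and a: "a < d"
  shows "t k *\<^sub>v w a = of_real (eigval k a) \<cdot>\<^sub>v w a"
proof -
  obtain c where c: "t k *\<^sub>v w a = c \<cdot>\<^sub>v w a" using w_eigen k a by blast
  have "cinner (w a) (t k *\<^sub>v w a) = c"
    using w_orthonormal a by (simp add: c cinner_smult_right)
  moreover have "cnj (cinner (w a) (t k *\<^sub>v w a)) = cinner (w a) (t k *\<^sub>v w a)"
    using t_herm w_carrier k a by (intro cinner_hermitian_real[of _ d]) auto
  ultimately have "Im c = 0"
    by (metis cnj.sel(2) neg_equal_zero)
  then have "c = of_real (eigval k a)"
    unfolding eigval_def \<open>cinner (w a) (t k *\<^sub>v w a) = c\<close> by (simp add: complex_eq_iff)
  with c show ?thesis by simp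
qed

lemma t_apply_w:
  assumes k: "k < d-1" and a: "a < d" and x: "x < d"
  shows "(\<Sum>y<d. t k $$ (x,y) * w a $ y) = of_real (eigval k a) * w a $ x"
  using index_mult_mat_vec_sum[of "t k" d d "w a" x] t_eigvec[OF k a] t_herm w_carrier k a x
  by auto

lemma w_apply_t:
  assumes k: "k < d-1" and a: "a < d" and y: "y < d"
  shows "(\<Sum>z<d. cnj (w a $ z) * t k $$ (z,y)) = of_real (eigval k a) * cnj (w a $ y)"
proof -
  have "t k $$ (z,y) = cnj (t k $$ (y,z))" if "z < d" for z
    using hermitian_index_cnj[of "t k" d z y] t_herm k y that by auto
  then have "(\<Sum>z<d. cnj (w a $ z) * t k $$ (z,y)) = cnj (\<Sum>z<d. t k $$ (y,z) * w a $ z)"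
    by (auto intro!: sum.cong simp: mult.commute)
  then show ?thesis using t_apply_w[OF k a y] by simp
qed

lemma mtrace_eq_sum_eigenvalues:
  assumes A: "A \<in> carrier_mat d d"
    and eig: "\<And>a x. a < d \<Longrightarrow> x < d \<Longrightarrow> (\<Sum>y<d. A $$ (x,y) * w a $ y) = \<mu> a * w a $ x"
  shows "mtrace A = (\<Sum>a<d. \<mu> a)"
proof -
  have "mtrace A = (\<Sum>x<d. \<Sum>y<d. A $$ (x,y) * (\<Sum>a<d. w a $ y * cnj (w a $ x)))"
    unfolding mtrace_def using A by (auto intro!: sum.cong simp: w_resolves_identity if_distrib cong: if_cong)
  also have "\<dots> = (\<Sum>x<d. \<Sum>a<d. \<Sum>y<d. cnj (w a $ x) * (A $$ (x,y) * w a $ y))"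
    by (simp add: sum_distrib_left ac_simps) (intro sum.cong refl sum.swap)
  also have "\<dots> = (\<Sum>a<d. \<Sum>x<d. cnj (w a $ x) * (\<Sum>y<d. A $$ (x,y) * w a $ y))"
    by (subst sum.swap) (simp add: sum_distrib_left)
  also have "\<dots> = (\<Sum>a<d. \<Sum>x<d. cnj (w a $ x) * (\<mu> a * w a $ x))"
    by (intro sum.cong refl) (simp add: eig)
  also have "\<dots> = (\<Sum>a<d. \<mu> a * (\<Sum>x<d. cnj (w a $ x) * w a $ x))"
    by (simp add: sum_distrib_left ac_simps)
  also have "\<dots> = (\<Sum>a<d. \<mu> a)"
    by (auto intro!: sum.cong simp: w_orthonormal_sum)
  finally show ?thesis .
qed

lemma eigval_sum_zero: "k < d-1 \<Longrightarrow> (\<Sum>a<d. eigval k a) = 0"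
proof -
  assume k: "k < d-1"
  have "mtrace (t k) = (\<Sum>a<d. of_real (eigval k a))"
    by (rule mtrace_eq_sum_eigenvalues) (use t_herm k t_apply_w in auto)
  then show ?thesis using t_herm k by (metis of_real_eq_0_iff of_real_sum)
qed

lemma eigval_orthonormal:
  "k < d-1 \<Longrightarrow> l < d-1 \<Longrightarrow> (\<Sum>a<d. eigval k a * eigval l a) = (if k = l then 1 else 0)"
proof -
  assume k: "k < d-1" and l: "l < d-1"
  have Tk: "t k \<in> carrier_mat d d" and Tl: "t l \<in> carrier_mat d d" using t_herm k l by auto
  have "mtrace (t k * t l) = (\<Sum>a<d. of_real (eigval k a * eigval l a))"
  proof (rule mtrace_eq_sum_eigenvalues)
    fix a x assume a: "a < d" and x: "x < d"
    have "(\<Sum>y<d. (t k * t l) $$ (x,y) * w a $ y) = (\<Sum>z<d. t k $$ (x,z) * (\<Sum>y<d. t l $$ (z,y) * w a $ y))"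
    proof -
      have "(\<Sum>y<d. (t k * t l) $$ (x,y) * w a $ y) = (\<Sum>y<d. \<Sum>z<d. t k $$ (x,z) * (t l $$ (z,y) * w a $ y))"
        using x by (simp add: index_mult_mat_sum[OF Tk Tl] sum_distrib_right sum_distrib_left ac_simps)
      then show ?thesis by (subst (asm) sum.swap) (simp add: sum_distrib_left)
    qed
    also have "\<dots> = (\<Sum>z<d. t k $$ (x,z) * (of_real (eigval l a) * w a $ z))"
      by (intro sum.cong refl) (simp add: t_apply_w[OF l a])
    also have "\<dots> = of_real (eigval l a) * (\<Sum>z<d. t k $$ (x,z) * w a $ z)"
      by (simp add: sum_distrib_left ac_simps)
    finally show "(\<Sum>y<d. (t k * t l) $$ (x,y) * w a $ y) = of_real (eigval k a * eigval l a) * w a $ x"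
      using t_apply_w[OF k a x] by simp
  qed (use Tk Tl in auto)
  then have "complex_of_real (\<Sum>a<d. eigval k a * eigval l a) = (if k = l then 1 else 0)"
    using t_orth k l by simp
  then show ?thesis by (metis of_real_0 of_real_1 of_real_eq_iff)
qed

definition eigval_frame :: "nat \<Rightarrow> complex vec" where
  "eigval_frame i = (if i = 0 then vec d (\<lambda>_. complex_of_real (1 / sqrt (real d)))
                     else vec d (\<lambda>a. complex_of_real (eigval (i - 1) a)))"

lemma eigval_frame_orthonormal:
  assumes i: "i < d" and j: "j < d"
  shows "cinner (eigval_frame i) (eigval_frame j) = (if i = j then 1 else 0)"
proof -
  have sum_zero: "(\<Sum>x<d. complex_of_real (eigval k x)) = 0" if "k < d-1" for k
    using eigval_sum_zero[OF that] by (metis of_real_0 of_real_sum)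
  show ?thesis
  proof (cases "i = 0"; cases "j = 0")
    assume "i = 0" "j = 0"
    then show ?thesis using d_pos by (simp add: cinner_def eigval_frame_def flip: of_real_mult)
  next
    assume "i = 0" "j \<noteq> 0"
    then show ?thesis using j sum_zero[of "j-1"]
      by (simp add: cinner_def eigval_frame_def sum_distrib_left[symmetric] sum_divide_distrib[symmetric])
  next
    assume "i \<noteq> 0" "j = 0"
    then show ?thesis using i sum_zero[of "i-1"]
      by (simp add: cinner_def eigval_frame_def sum_distrib_right[symmetric] sum_divide_distrib[symmetric])
  next
    assume "i \<noteq> 0" "j \<noteq> 0"
    then have "(i - 1 = j - 1) = (i = j)" by arith
    then show ?thesis using i j eigval_orthonormal[of "i-1" "j-1"] \<open>i \<noteq> 0\<close> \<open>j \<noteq> 0\<close>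
      by (simp add: cinner_def eigval_frame_def flip: of_real_mult of_real_sum)
  qed
qed

text \<open>The orthonormal rows \<open>eigval_frame\<close> form an orthogonal matrix, so its columns are orthonormal
  as well.\<close>
lemma eigval_completeness:
  assumes a: "a < d" and b: "b < d"
  shows "(\<Sum>k<d-1. eigval k a * eigval k b) = (if a = b then 1 else 0) - 1 / real d"
proof -
  have "d = Suc (d-1)" using d_pos by simp
  then have "(\<Sum>i<d. eigval_frame i $ a * cnj (eigval_frame i $ b))
      = eigval_frame 0 $ a * cnj (eigval_frame 0 $ b)
        + (\<Sum>k<d-1. eigval_frame (Suc k) $ a * cnj (eigval_frame (Suc k) $ b))"
    using sum.lessThan_Suc_shift[of "\<lambda>i. eigval_frame i $ a * cnj (eigval_frame i $ b)" "d-1"] by simp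
  also have "\<dots> = complex_of_real (1 / real d + (\<Sum>k<d-1. eigval k a * eigval k b))"
    using a b by (simp add: eigval_frame_def of_real_sum flip: of_real_mult)
  finally have "complex_of_real (1 / real d + (\<Sum>k<d-1. eigval k a * eigval k b)) = (if a = b then 1 else 0)"
    using orthonormal_family_resolves_identity[of d eigval_frame a b] eigval_frame_orthonormal a b
    by (simp add: eigval_frame_def)
  then have "1 / real d + (\<Sum>k<d-1. eigval k a * eigval k b) = (if a = b then 1 else 0)"
    by (metis of_real_0 of_real_1 of_real_eq_iff)
  then show ?thesis by linarith
qed

lemma mat_pow_diagonal:
  assumes A: "A \<in> carrier_mat d d"
    and eig: "\<And>a y. a < d \<Longrightarrow> y < d \<Longrightarrow> (\<Sum>z<d. cnj (w a $ z) * A $$ (z,y)) = \<mu> a * cnj (w a $ y)"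
  shows "x < d \<Longrightarrow> y < d \<Longrightarrow> (A ^\<^sub>m n) $$ (x,y) = (\<Sum>a<d. \<mu> a ^ n * (w a $ x * cnj (w a $ y)))"
proof (induction n arbitrary: x y)
  case 0
  then show ?case using A w_resolves_identity[of x y] by simp
next
  case (Suc n)
  have P: "A ^\<^sub>m n \<in> carrier_mat d d" using A by simp
  have "(A ^\<^sub>m Suc n) $$ (x,y) = (\<Sum>z<d. \<Sum>a<d. \<mu> a ^ n * w a $ x * (cnj (w a $ z) * A $$ (z,y)))"
    using Suc by (auto intro!: sum.cong simp: index_mult_mat_sum[OF P A] sum_distrib_left sum_distrib_right ac_simps)
  also have "\<dots> = (\<Sum>a<d. \<mu> a ^ n * w a $ x * (\<Sum>z<d. cnj (w a $ z) * A $$ (z,y)))"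
    by (subst sum.swap) (simp add: sum_distrib_left)
  also have "\<dots> = (\<Sum>a<d. \<mu> a ^ Suc n * (w a $ x * cnj (w a $ y)))"
    using Suc.prems by (auto intro!: sum.cong simp: eig)
  finally show ?case .
qed

lemma mexp_diagonal:
  assumes A: "A \<in> carrier_mat d d"
    and eig: "\<And>a y. a < d \<Longrightarrow> y < d \<Longrightarrow> (\<Sum>z<d. cnj (w a $ z) * A $$ (z,y)) = \<mu> a * cnj (w a $ y)"
    and x: "x < d" and y: "y < d"
  shows "mexp A $$ (x,y) = (\<Sum>a<d. exp (\<mu> a) * (w a $ x * cnj (w a $ y)))"
proof -
  have "mexp A $$ (x,y) = (\<Sum>k. \<Sum>a<d. (\<mu> a ^ k /\<^sub>R fact k) * (w a $ x * cnj (w a $ y)))"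
    unfolding mexp_def using A x y
    by (auto intro!: suminf_cong sum.cong simp: mat_pow_diagonal[OF A eig x y] sum_divide_distrib
        scaleR_conv_of_real field_simps)
  also have "\<dots> = (\<Sum>a<d. exp (\<mu> a) * (w a $ x * cnj (w a $ y)))"
    by (rule sums_unique[symmetric], rule sums_sum, rule sums_mult2, rule exp_converges)
  finally show ?thesis .
qed

lemma mexp_apply_w:
  assumes A: "A \<in> carrier_mat d d"
    and eig: "\<And>a y. a < d \<Longrightarrow> y < d \<Longrightarrow> (\<Sum>z<d. cnj (w a $ z) * A $$ (z,y)) = \<mu> a * cnj (w a $ y)"
    and b: "b < d" and x: "x < d"
  shows "(\<Sum>y<d. mexp A $$ (x,y) * w b $ y) = exp (\<mu> b) * w b $ x"
proof -
  have "(\<Sum>y<d. mexp A $$ (x,y) * w b $ y)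
      = (\<Sum>a<d. exp (\<mu> a) * w a $ x * (\<Sum>y<d. cnj (w a $ y) * w b $ y))"
    by (simp add: mexp_diagonal[OF A eig x] sum_distrib_left sum_distrib_right ac_simps)
       (rule sum.swap)
  also have "\<dots> = exp (\<mu> b) * w b $ x"
    using b by (simp add: w_orthonormal_sum if_distrib cong: if_cong)
  finally show ?thesis .
qed

definition generator :: "(real \<Rightarrow> real) \<Rightarrow> (nat \<Rightarrow> real) \<Rightarrow> complex mat" where
  "generator fj \<theta> = mat d d (\<lambda>(a,b). \<i> * (\<Sum>k<d-1. complex_of_real (fj (\<theta> k)) * t k $$ (a,b)))"

lemma Ugate_eq_mexp_generator: "Ugate d t fj \<theta> = mexp (generator fj \<theta>)"
  unfolding Ugate_def generator_def by simp

lemma Ugate_carrier: "Ugate d t fj \<theta> \<in> carrier_mat d d"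
  unfolding Ugate_eq_mexp_generator mexp_def generator_def by simp

lemma w_apply_generator:
  assumes a: "a < d" and y: "y < d"
  shows "(\<Sum>z<d. cnj (w a $ z) * generator fj \<theta> $$ (z,y))
       = (\<i> * of_real (\<Sum>k<d-1. fj (\<theta> k) * eigval k a)) * cnj (w a $ y)"
proof -
  have "(\<Sum>z<d. cnj (w a $ z) * generator fj \<theta> $$ (z,y))
      = (\<Sum>k<d-1. \<i> * of_real (fj (\<theta> k)) * (\<Sum>z<d. cnj (w a $ z) * t k $$ (z,y)))"
    unfolding generator_def using y
    by (simp add: sum_distrib_left ac_simps) (rule sum.swap)
  also have "\<dots> = (\<i> * of_real (\<Sum>k<d-1. fj (\<theta> k) * eigval k a)) * cnj (w a $ y)"
    by (simp add: w_apply_t a y sum_distrib_left sum_distrib_right of_real_sum ac_simps)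
  finally show ?thesis .
qed

lemma Ugate_apply_w:
  assumes b: "b < d" and x: "x < d"
  shows "(\<Sum>y<d. Ugate d t fj \<theta> $$ (x,y) * w b $ y)
       = exp (\<i> * of_real (\<Sum>k<d-1. fj (\<theta> k) * eigval k b)) * w b $ x"
  unfolding Ugate_eq_mexp_generator
  by (rule mexp_apply_w[OF _ w_apply_generator b x]) (simp add: generator_def)

definition phase :: "(nat \<Rightarrow> real \<Rightarrow> real) \<Rightarrow> nat \<Rightarrow> (nat \<Rightarrow> real) \<Rightarrow> nat \<Rightarrow> real" where
  "phase f m \<theta> b = (\<Sum>j<m. \<Sum>k<d-1. f j (\<theta> k) * eigval k b)"

lemma circuit_diagonal:
  "circuit d t f m \<theta> \<in> carrier_mat d d \<and>
   (\<forall>b<d. \<forall>x<d. (\<Sum>y<d. circuit d t f m \<theta> $$ (x,y) * w b $ y)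
       = exp (\<i> * of_real (phase f m \<theta> b)) * w b $ x)"
proof (induction m)
  case 0
  show ?case by (simp add: phase_def sum_delta_mult)
next
  case (Suc m)
  let ?C = "circuit d t f m \<theta>" and ?U = "Ugate d t (f m) \<theta>"
  have C: "?C \<in> carrier_mat d d" using Suc by simp
  have U: "?U \<in> carrier_mat d d" by (rule Ugate_carrier)
  have "(\<Sum>y<d. (?U * ?C) $$ (x,y) * w b $ y) = exp (\<i> * of_real (phase f (Suc m) \<theta> b)) * w b $ x"
    if b: "b < d" and x: "x < d" for b x
  proof -
    have "(\<Sum>y<d. (?U * ?C) $$ (x,y) * w b $ y) = (\<Sum>z<d. ?U $$ (x,z) * (\<Sum>y<d. ?C $$ (z,y) * w b $ y))"
      using x by (simp add: index_mult_mat_sum[OF U C] sum_distrib_right sum_distrib_left ac_simps)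
        (rule sum.swap)
    also have "\<dots> = (\<Sum>z<d. ?U $$ (x,z) * w b $ z) * exp (\<i> * of_real (phase f m \<theta> b))"
      using Suc b by (simp add: sum_distrib_right mult.assoc mult.commute[of "exp _"])
    also have "\<dots> = exp (\<i> * of_real (phase f (Suc m) \<theta> b)) * w b $ x"
      by (simp add: Ugate_apply_w[OF b x] phase_def exp_add[symmetric] distrib_left add.commute)
    finally show ?thesis .
  qed
  then show ?case using U C by simp
qed

definition expand :: "(nat \<Rightarrow> complex) \<Rightarrow> nat \<Rightarrow> complex" where
  "expand \<alpha> x = (\<Sum>a<d. \<alpha> a * w a $ x)"

lemma braket_expand: "braket d (expand \<alpha>) (expand \<beta>) = (\<Sum>a<d. cnj (\<alpha> a) * \<beta> a)"
proof -
  have "braket d (expand \<alpha>) (expand \<beta>)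
      = (\<Sum>a<d. \<Sum>b<d. cnj (\<alpha> a) * \<beta> b * (\<Sum>x<d. cnj (w a $ x) * w b $ x))"
    unfolding braket_def expand_def
    by (simp add: sum_distrib_left sum_distrib_right ac_simps)
       (subst sum.swap, rule sum.cong[OF refl], rule sum.swap)
  then show ?thesis by (simp add: w_orthonormal_sum if_distrib cong: if_cong)
qed

definition amplitude :: "(nat \<Rightarrow> real \<Rightarrow> real) \<Rightarrow> nat \<Rightarrow> (nat \<Rightarrow> real) \<Rightarrow> nat \<Rightarrow> complex" where
  "amplitude f n \<theta> a = exp (\<i> * of_real (phase f n \<theta> a)) / of_real (sqrt (real d))"

lemma amplitude_norm: "cnj (amplitude f n \<theta> a) * amplitude f n \<theta> a = 1 / of_nat d"
proof -
  have "cnj (exp (\<i> * of_real r)) * exp (\<i> * of_real r) = 1" for r :: real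
    using cis_cnj[of r] cis_mult[of "-r" r] by (simp add: cis_conv_exp)
  moreover have "complex_of_real (sqrt (real d)) * complex_of_real (sqrt (real d)) = of_nat d"
    by (simp flip: of_real_mult)
  ultimately show ?thesis unfolding amplitude_def by (simp add: field_simps)
qed

lemma braket_expand_amplitude:
  "braket d (expand (\<lambda>a. \<kappa> a * amplitude f n \<theta> a)) (expand (\<lambda>a. \<kappa>' a * amplitude f n \<theta> a))
     = (\<Sum>a<d. cnj (\<kappa> a) * \<kappa>' a) / of_nat d"
proof -
  have "braket d (expand (\<lambda>a. \<kappa> a * amplitude f n \<theta> a)) (expand (\<lambda>a. \<kappa>' a * amplitude f n \<theta> a))
      = (\<Sum>a<d. cnj (\<kappa> a) * \<kappa>' a * (cnj (amplitude f n \<theta> a) * amplitude f n \<theta> a))"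
    by (simp add: braket_expand ac_simps)
  then show ?thesis by (simp add: amplitude_norm sum_divide_distrib)
qed

lemma psi_out_expand: "x < d \<Longrightarrow> psi_out d n t w f \<theta> $ x = expand (amplitude f n \<theta>) x"
proof -
  assume x: "x < d"
  let ?C = "circuit d t f n \<theta>"
  have C: "?C \<in> carrier_mat d d" using circuit_diagonal by blast
  have "psi_out d n t w f \<theta> $ x = (\<Sum>y<d. ?C $$ (x,y) * psi_sep d w $ y)"
    unfolding psi_out_def by (rule index_mult_mat_vec_sum[OF C _ x]) (simp add: psi_sep_def)
  also have "\<dots> = (\<Sum>a<d. \<Sum>y<d. ?C $$ (x,y) * w a $ y) / of_real (sqrt (real d))"
    by (simp add: psi_sep_def sum_divide_distrib sum_distrib_left) (rule sum.swap)
  also have "\<dots> = expand (amplitude f n \<theta>) x"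
    using circuit_diagonal x by (simp add: expand_def amplitude_def sum_divide_distrib)
  finally show ?thesis .
qed

lemma rho_out_carrier: "rho_out d n t w f \<theta> \<in> carrier_mat d d"
  unfolding rho_out_def proj_def by simp

lemma rho_out_entry:
  "x < d \<Longrightarrow> y < d \<Longrightarrow> rho_out d n t w f \<theta> $$ (x,y)
     = expand (amplitude f n \<theta>) x * cnj (expand (amplitude f n \<theta>) y)"
  unfolding rho_out_def proj_def by (simp add: psi_out_expand)

definition phase_rate :: "(nat \<Rightarrow> real \<Rightarrow> real) \<Rightarrow> nat \<Rightarrow> (nat \<Rightarrow> real) \<Rightarrow> nat \<Rightarrow> real" where
  "phase_rate f n \<theta> j = (\<Sum>i<n. deriv (f i) (\<theta> j))"

definition tangent :: "(nat \<Rightarrow> real \<Rightarrow> real) \<Rightarrow> nat \<Rightarrow> (nat \<Rightarrow> real) \<Rightarrow> nat \<Rightarrow> nat \<Rightarrow> complex" where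
  "tangent f n \<theta> j = expand (\<lambda>a. of_real (eigval j a) * amplitude f n \<theta> a)"

lemma phase_deriv:
  assumes df: "\<forall>i<n. f i differentiable (at (\<theta> j))" and j: "j < d-1"
  shows "((\<lambda>s. phase f n (\<theta>(j:=s)) a) has_real_derivative phase_rate f n \<theta> j * eigval j a) (at (\<theta> j))"
proof -
  have "((\<lambda>s. phase f n (\<theta>(j:=s)) a) has_real_derivative
          (\<Sum>i<n. \<Sum>k<d-1. if k = j then deriv (f i) (\<theta> j) * eigval k a else 0)) (at (\<theta> j))"
    unfolding phase_def
  proof (intro DERIV_sum)
    fix i k assume i: "i \<in> {..<n}" and k: "k \<in> {..<d-1}"
    have "DERIV (f i) (\<theta> j) :> deriv (f i) (\<theta> j)"
      using df i DERIV_deriv_iff_real_differentiable by blast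
    then show "((\<lambda>s. f i ((\<theta>(j:=s)) k) * eigval k a) has_real_derivative
            (if k = j then deriv (f i) (\<theta> j) * eigval k a else 0)) (at (\<theta> j))"
      by (cases "k = j") (simp_all add: DERIV_cmult_right)
  qed
  then show ?thesis
    using j by (simp add: phase_rate_def sum_distrib_right)
qed

lemma psi_out_deriv:
  assumes df: "\<forall>i<n. f i differentiable (at (\<theta> j))" and j: "j < d-1" and x: "x < d"
  shows "((\<lambda>s. psi_out d n t w f (\<theta>(j:=s)) $ x) has_vector_derivative
     (\<i> * of_real (phase_rate f n \<theta> j) * tangent f n \<theta> j x)) (at (\<theta> j))"
proof -
  let ?g = "phase_rate f n \<theta> j"
  have exp_deriv: "((\<lambda>s. exp (\<i> * of_real (phase f n (\<theta>(j:=s)) a))) has_vector_derivative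
      (\<i> * of_real (?g * eigval j a) * exp (\<i> * of_real (phase f n \<theta> a)))) (at (\<theta> j))" for a
  proof -
    have "((\<lambda>s. \<i> * of_real (phase f n (\<theta>(j:=s)) a)) has_vector_derivative \<i> * of_real (?g * eigval j a))
           (at (\<theta> j))"
      by (intro has_vector_derivative_mult_right has_vector_derivative_of_real phase_deriv df j)
    from field_vector_diff_chain_at[OF this DERIV_exp] show ?thesis by (simp add: o_def)
  qed
  have "((\<lambda>s. (\<Sum>a<d. exp (\<i> * of_real (phase f n (\<theta>(j:=s)) a)) * w a $ x) / of_real (sqrt (real d)))
     has_vector_derivative
     ((\<Sum>a<d. \<i> * of_real (?g * eigval j a) * exp (\<i> * of_real (phase f n \<theta> a)) * w a $ x)
        / of_real (sqrt (real d)))) (at (\<theta> j))"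
    by (intro has_vector_derivative_divide has_vector_derivative_sum has_vector_derivative_mult_left exp_deriv)
  moreover have "(\<lambda>s. psi_out d n t w f (\<theta>(j:=s)) $ x)
      = (\<lambda>s. (\<Sum>a<d. exp (\<i> * of_real (phase f n (\<theta>(j:=s)) a)) * w a $ x) / of_real (sqrt (real d)))"
    using x by (simp add: psi_out_expand expand_def amplitude_def sum_divide_distrib)
  moreover have "(\<Sum>a<d. \<i> * of_real (?g * eigval j a) * exp (\<i> * of_real (phase f n \<theta> a)) * w a $ x)
        / of_real (sqrt (real d)) = \<i> * of_real ?g * tangent f n \<theta> j x"
    unfolding tangent_def expand_def amplitude_def
    by (simp add: sum_divide_distrib sum_distrib_left ac_simps)
  ultimately show ?thesis by simp
qed

lemma rho_out_deriv:
  assumes df: "\<forall>i<n. f i differentiable (at (\<theta> j))" and j: "j < d-1" and x: "x < d" and y: "y < d"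
  shows "((\<lambda>s. rho_out d n t w f (\<theta>(j:=s)) $$ (x,y)) has_vector_derivative
     \<i> * of_real (phase_rate f n \<theta> j) *
        (tangent f n \<theta> j x * cnj (expand (amplitude f n \<theta>) y)
         - expand (amplitude f n \<theta>) x * cnj (tangent f n \<theta> j y))) (at (\<theta> j))"
proof -
  have "(\<lambda>s. rho_out d n t w f (\<theta>(j:=s)) $$ (x,y))
      = (\<lambda>s. psi_out d n t w f (\<theta>(j:=s)) $ x * cnj (psi_out d n t w f (\<theta>(j:=s)) $ y))"
    using x y by (simp add: rho_out_def proj_def)
  moreover have "((\<lambda>s. psi_out d n t w f (\<theta>(j:=s)) $ x * cnj (psi_out d n t w f (\<theta>(j:=s)) $ y))
     has_vector_derivative
     (psi_out d n t w f (\<theta>(j:=\<theta> j)) $ x * cnj (\<i> * of_real (phase_rate f n \<theta> j) * tangent f n \<theta> j y)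
      + \<i> * of_real (phase_rate f n \<theta> j) * tangent f n \<theta> j x * cnj (psi_out d n t w f (\<theta>(j:=\<theta> j)) $ y)))
     (at (\<theta> j))"
    by (intro has_vector_derivative_mult has_vector_derivative_cnj psi_out_deriv df j x y)
  ultimately show ?thesis using x y by (simp add: psi_out_expand algebra_simps)
qed

subsection \<open>SLD quantum information and an attaining measurement\<close>

definition povm_weight :: real where
  "povm_weight = 1 / sqrt (real (d - 1))"

definition povm_sign :: "nat \<Rightarrow> real" where
  "povm_sign m = (if even m then 1 else -1)"

text \<open>Outcomes \<open>2l\<close> and \<open>2l+1\<close> belong to the \<open>l\<close>-th generator and carry the coefficients
  \<open>povm_weight \<plusminus> \<i> \<surd>d eigval l a\<close> on the eigenvector \<open>w a\<close>; over the pair the cross terms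
  cancel, which is what makes these elements resolve the identity.\<close>
definition povm_coeff :: "nat \<Rightarrow> nat \<Rightarrow> complex" where
  "povm_coeff m a = of_real povm_weight + \<i> * of_real (povm_sign m * sqrt (real d) * eigval (m div 2) a)"

lemma povm_coeff_pair_sum:
  "povm_coeff (2*l) a * cnj (povm_coeff (2*l) b) / 2 + povm_coeff (2*l+1) a * cnj (povm_coeff (2*l+1) b) / 2
     = of_real (povm_weight\<^sup>2 + real d * (eigval l a * eigval l b))"
  by (simp add: povm_coeff_def povm_sign_def complex_eq_iff field_simps power2_eq_square)

lemma povm_coeff_sum:
  assumes d2: "2 \<le> d" and a: "a < d" and b: "b < d"
  shows "(\<Sum>m<2*(d-1). povm_coeff m a * cnj (povm_coeff m b) / 2) = (if a = b then of_nat d else 0)"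
proof -
  have weight: "real (d-1) * povm_weight\<^sup>2 = 1"
    unfolding povm_weight_def using d2 by (simp add: power_divide)
  have "(\<Sum>m<2*(d-1). povm_coeff m a * cnj (povm_coeff m b) / 2)
      = (\<Sum>l<d-1. of_real (povm_weight\<^sup>2 + real d * (eigval l a * eigval l b)))"
    by (simp only: sum_lessThan_double povm_coeff_pair_sum)
  also have "\<dots> = of_real (real (d-1) * povm_weight\<^sup>2 + real d * (\<Sum>l<d-1. eigval l a * eigval l b))"
    by (simp add: sum.distrib sum_distrib_left of_real_sum)
  finally show ?thesis
    unfolding weight eigval_completeness[OF a b] using d_pos by (simp add: field_simps)
qed

context
  fixes f :: "nat \<Rightarrow> real \<Rightarrow> real" and n :: nat and \<theta> :: "nat \<Rightarrow> real"
begin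

abbreviation \<psi> :: "nat \<Rightarrow> complex" where
  "\<psi> \<equiv> expand (amplitude f n \<theta>)"

lemma braket_psi_psi: "braket d \<psi> \<psi> = 1"
  using braket_expand_amplitude[of "\<lambda>_. 1" f n \<theta> "\<lambda>_. 1"] d_pos by simp

lemma braket_psi_tangent: "j < d-1 \<Longrightarrow> braket d \<psi> (tangent f n \<theta> j) = 0"
  using braket_expand_amplitude[of "\<lambda>_. 1" f n \<theta> "\<lambda>a. of_real (eigval j a)"] eigval_sum_zero[of j]
  unfolding tangent_def by (simp flip: of_real_sum)

lemma braket_tangent_tangent:
  assumes "j < d-1" "k < d-1"
  shows "braket d (tangent f n \<theta> k) (tangent f n \<theta> j) = (if k = j then 1 else 0) / of_nat d"
  using braket_expand_amplitude[of "\<lambda>a. of_real (eigval k a)" f n \<theta> "\<lambda>a. of_real (eigval j a)"]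
    eigval_orthonormal[OF assms(2,1)]
  unfolding tangent_def by (simp flip: of_real_sum of_real_mult)

lemma sld_apply_psi:
  assumes SLD: "is_SLD d (d-1) (rho_out d n t w f) lam \<theta>"
    and df: "\<forall>i<n. \<forall>x. f i differentiable (at x)" and j: "j < d-1" and x: "x < d"
  shows "(\<Sum>y<d. lam j $$ (x,y) * \<psi> y) = 2 * \<i> * of_real (phase_rate f n \<theta> j) * tangent f n \<theta> j x"
proof (rule sld_apply_pure_state[OF rho_out_carrier _ rho_out_entry braket_psi_psi braket_psi_tangent[OF j] _ x])
  show "lam j \<in> carrier_mat d d" using SLD j unfolding is_SLD_def by auto
  fix a b assume ab: "a < d" "b < d"
  have "((\<lambda>s. rho_out d n t w f (\<theta>(j := s)) $$ (a,b)) has_vector_derivative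
         (1/2) * ((rho_out d n t w f \<theta> * lam j + lam j * rho_out d n t w f \<theta>) $$ (a,b))) (at (\<theta> j))"
    using SLD j ab unfolding is_SLD_def by auto
  from vector_derivative_unique_at[OF this rho_out_deriv[OF _ j ab]] df
  show "(1/2) * ((rho_out d n t w f \<theta> * lam j + lam j * rho_out d n t w f \<theta>) $$ (a,b))
      = \<i> * of_real (phase_rate f n \<theta> j) * (tangent f n \<theta> j a * cnj (\<psi> b) - \<psi> a * cnj (tangent f n \<theta> j b))"
    by blast
qed

lemma sld_info_eq:
  assumes SLD: "is_SLD d (d-1) (rho_out d n t w f) lam \<theta>"
    and df: "\<forall>i<n. \<forall>x. f i differentiable (at x)" and j: "j < d-1" and k: "k < d-1"
  shows "sld_info (rho_out d n t w f) lam \<theta> j k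
       = (if j = k then 4 * phase_rate f n \<theta> j * phase_rate f n \<theta> k / real d else 0)"
proof -
  have L: "lam j \<in> carrier_mat d d" "lam k \<in> carrier_mat d d" "hermitian (lam k)"
    using SLD j k unfolding is_SLD_def by auto
  have "mtrace (lam j * rho_out d n t w f \<theta> * lam k)
      = braket d (\<lambda>x. 2 * \<i> * of_real (phase_rate f n \<theta> k) * tangent f n \<theta> k x)
                 (\<lambda>x. 2 * \<i> * of_real (phase_rate f n \<theta> j) * tangent f n \<theta> j x)"
    by (rule mtrace_sld_pure_state[OF rho_out_carrier L rho_out_entry
          sld_apply_psi[OF SLD df j] sld_apply_psi[OF SLD df k]])
  also have "\<dots> = cnj (2 * \<i> * of_real (phase_rate f n \<theta> k)) * (2 * \<i> * of_real (phase_rate f n \<theta> j))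
      * braket d (tangent f n \<theta> k) (tangent f n \<theta> j)"
    by (rule braket_scale)
  also have "\<dots> = of_real (4 * phase_rate f n \<theta> k * phase_rate f n \<theta> j)
      * braket d (tangent f n \<theta> k) (tangent f n \<theta> j)"
    by (simp add: complex_eq_iff)
  also have "\<dots> = of_real (if j = k then 4 * phase_rate f n \<theta> j * phase_rate f n \<theta> k / real d else 0)"
    using braket_tangent_tangent[OF j k] by (cases "j = k") simp_all
  finally show ?thesis unfolding sld_info_def by (simp only: Re_complex_of_real)
qed

definition povm_vec :: "nat \<Rightarrow> nat \<Rightarrow> complex" where
  "povm_vec m = expand (\<lambda>a. povm_coeff m a * amplitude f n \<theta> a)"

definition povm :: "nat \<Rightarrow> complex mat" where
  "povm m = half_projector d (povm_vec m)"

lemma braket_povm_vec_psi: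
  assumes "m < 2*(d-1)"
  shows "braket d (povm_vec m) \<psi> = of_real povm_weight"
proof -
  have "braket d (povm_vec m) \<psi> = (\<Sum>a<d. cnj (povm_coeff m a)) / of_nat d"
    using braket_expand_amplitude[of "povm_coeff m" f n \<theta> "\<lambda>_. 1"] unfolding povm_vec_def by simp
  also have "\<dots> = of_real povm_weight"
    using eigval_sum_zero[of "m div 2"] assms d_pos
    by (simp add: povm_coeff_def sum.distrib sum_subtractf flip: sum_distrib_left of_real_sum)
  finally show ?thesis .
qed

lemma braket_psi_povm_vec: "m < 2*(d-1) \<Longrightarrow> braket d \<psi> (povm_vec m) = of_real povm_weight"
  using braket_povm_vec_psi braket_cnj by (metis complex_cnj_complex_of_real)

lemma braket_povm_vec_tangent:
  assumes m: "m < 2*(d-1)" and j: "j < d-1"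
  shows "braket d (povm_vec m) (tangent f n \<theta> j)
       = - \<i> * of_real (povm_sign m * sqrt (real d) * (if m div 2 = j then 1 else 0)) / of_nat d"
proof -
  have "braket d (povm_vec m) (tangent f n \<theta> j) = (\<Sum>a<d. cnj (povm_coeff m a) * of_real (eigval j a)) / of_nat d"
    using braket_expand_amplitude[of "povm_coeff m" f n \<theta> "\<lambda>a. of_real (eigval j a)"]
    unfolding povm_vec_def tangent_def by simp
  also have "\<dots> = - \<i> * of_real (povm_sign m * sqrt (real d) * (if m div 2 = j then 1 else 0)) / of_nat d"
    using eigval_sum_zero[OF j] eigval_orthonormal[of "m div 2" j] m j
    by (simp add: povm_coeff_def algebra_simps sum_subtractf
        flip: sum_distrib_left sum_distrib_right of_real_sum of_real_mult)
  finally show ?thesis .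
qed

lemma braket_tangent_povm_vec:
  "m < 2*(d-1) \<Longrightarrow> j < d-1 \<Longrightarrow> braket d (tangent f n \<theta> j) (povm_vec m)
       = \<i> * of_real (povm_sign m * sqrt (real d) * (if m div 2 = j then 1 else 0)) / of_nat d"
  using braket_povm_vec_tangent braket_cnj[of d "tangent f n \<theta> j" "povm_vec m"] by simp

lemma is_povm_povm:
  assumes d2: "2 \<le> d"
  shows "is_povm d (2*(d-1)) povm"
  unfolding is_povm_def
proof (intro conjI allI impI)
  show "psd d (povm m)" for m unfolding povm_def by (rule psd_half_projector)
next
  fix x y assume x: "x < d" and y: "y < d"
  let ?c = "amplitude f n \<theta>"
  define H where "H a b = ?c a * cnj (?c b) * (w a $ x * cnj (w b $ y))" for a b
  have "(\<Sum>m<2*(d-1). povm m $$ (x,y))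
      = (\<Sum>m<2*(d-1). \<Sum>a<d. \<Sum>b<d. povm_coeff m a * cnj (povm_coeff m b) / 2 * H a b)"
    unfolding povm_def half_projector_def povm_vec_def expand_def H_def using x y
    by (simp add: sum_product sum_divide_distrib ac_simps)
  also have "\<dots> = (\<Sum>a<d. \<Sum>b<d. \<Sum>m<2*(d-1). povm_coeff m a * cnj (povm_coeff m b) / 2 * H a b)"
    by (subst sum.swap) (intro sum.cong refl sum.swap)
  also have "\<dots> = (\<Sum>a<d. \<Sum>b<d. (if a = b then of_nat d else 0) * H a b)"
    by (intro sum.cong refl) (simp only: sum_distrib_right[symmetric] povm_coeff_sum[OF d2] lessThan_iff)
  also have "\<dots> = (\<Sum>a<d. of_nat d * (cnj (?c a) * ?c a) * (w a $ x * cnj (w a $ y)))"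
    unfolding H_def by (simp add: if_distrib if_distribR ac_simps cong: if_cong)
  also have "\<dots> = 1\<^sub>m d $$ (x,y)"
    using d_pos x y by (simp add: amplitude_norm w_resolves_identity)
  finally show "(\<Sum>m<2*(d-1). povm m $$ (x,y)) = 1\<^sub>m d $$ (x,y)" .
qed

lemma outcome_prob_povm:
  assumes m: "m < 2*(d-1)"
  shows "outcome_prob (rho_out d n t w f) povm m \<theta> = povm_weight\<^sup>2 / 2"
proof -
  have "mtrace (rho_out d n t w f \<theta> * povm m) = braket d (povm_vec m) \<psi> * braket d \<psi> (povm_vec m) / 2"
    unfolding povm_def by (rule mtrace_rank_one_mult_half_projector[OF rho_out_carrier rho_out_entry])
  also have "\<dots> = of_real (povm_weight\<^sup>2 / 2)"
    by (simp add: braket_povm_vec_psi[OF m] braket_psi_povm_vec[OF m] power2_eq_square)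
  finally show ?thesis unfolding outcome_prob_def by (simp only: Re_complex_of_real)
qed

lemma outcome_prob_povm_deriv:
  assumes m: "m < 2*(d-1)" and j: "j < d-1" and df: "\<forall>i<n. f i differentiable (at (\<theta> j))"
  shows "((\<lambda>s. outcome_prob (rho_out d n t w f) povm m (\<theta>(j:=s))) has_real_derivative
           (if m div 2 = j then povm_sign m * phase_rate f n \<theta> j * povm_weight * sqrt (real d) / real d else 0))
         (at (\<theta> j))"
proof -
  have "((\<lambda>s. outcome_prob (rho_out d n t w f) povm m (\<theta>(j:=s))) has_real_derivative
     Re (\<i> * of_real (phase_rate f n \<theta> j) *
       (braket d (povm_vec m) (tangent f n \<theta> j) * braket d \<psi> (povm_vec m)
        - braket d (povm_vec m) \<psi> * braket d (tangent f n \<theta> j) (povm_vec m)) / 2)) (at (\<theta> j))"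
    unfolding outcome_prob_def povm_def sum_commutator_half_projector[symmetric]
    by (rule has_real_derivative_Re_mtrace_mult[OF rho_out_carrier half_projector_carrier
          rho_out_deriv[where f = f and n = n and \<theta> = \<theta>, OF df j]])
  then show ?thesis
    using m j d_pos by (cases "m div 2 = j") (simp_all add: braket_povm_vec_tangent
        braket_tangent_povm_vec braket_povm_vec_psi braket_psi_povm_vec field_simps)
qed

lemma fisher_info_povm:
  assumes d2: "2 \<le> d" and df: "\<forall>i<n. \<forall>x. f i differentiable (at x)" and j: "j < d-1" and k: "k < d-1"
  shows "fisher_info (rho_out d n t w f) (2*(d-1)) povm \<theta> j k
       = (if j = k then 4 * phase_rate f n \<theta> j * phase_rate f n \<theta> k / real d else 0)"
proof -
  let ?\<rho> = "rho_out d n t w f" and ?g = "phase_rate f n \<theta>" and ?\<beta> = povm_weight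
  have \<beta>: "?\<beta> > 0" unfolding povm_weight_def using d2 by simp
  have partial: "partial_prob ?\<rho> povm m \<theta> l
      = (if m div 2 = l then povm_sign m * ?g l * ?\<beta> * sqrt (real d) / real d else 0)"
    if "m < 2*(d-1)" "l < d-1" for m l
    unfolding partial_prob_def using df that by (intro DERIV_imp_deriv outcome_prob_povm_deriv) auto
  have ratio: "partial_prob ?\<rho> povm m \<theta> j * partial_prob ?\<rho> povm m \<theta> k / outcome_prob ?\<rho> povm m \<theta>
      = (if m div 2 = j \<and> j = k then 2 * ?g j * ?g k / real d else 0)" if m: "m < 2*(d-1)" for m
  proof -
    have "povm_sign m * povm_sign m = 1" by (simp add: povm_sign_def)
    then show ?thesis
      using \<beta> d2 by (simp add: partial[OF m j] partial[OF m k] outcome_prob_povm[OF m]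
          field_simps power2_eq_square)
  qed
  have "fisher_info ?\<rho> (2*(d-1)) povm \<theta> j k
      = (\<Sum>m<2*(d-1). if m div 2 = j \<and> j = k then 2 * ?g j * ?g k / real d else 0)"
  proof -
    have "{m. m < 2*(d-1) \<and> outcome_prob ?\<rho> povm m \<theta> > 0} = {..<2*(d-1)}"
      using \<beta> by (auto simp: outcome_prob_povm)
    then show ?thesis unfolding fisher_info_def by (auto intro!: sum.cong simp: ratio)
  qed
  also have "\<dots> = (\<Sum>l<d-1. if l = j \<and> j = k then 4 * ?g j * ?g k / real d else 0)"
    by (auto simp: sum_lessThan_double intro!: sum.cong)
  also have "\<dots> = (if j = k then 4 * ?g j * ?g k / real d else 0)"
    using j by (cases "j = k") simp_all
  finally show ?thesis .
qed

end

end

theorem proposition4p5: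
  fixes d n :: nat and t :: "nat \<Rightarrow> complex mat" and w :: "nat \<Rightarrow> complex vec"
    and f :: "nat \<Rightarrow> real \<Rightarrow> real" and \<theta> :: "nat \<Rightarrow> real"
  assumes d_pos: "0 < d"
    and t_herm: "\<forall>k<d-1. t k \<in> carrier_mat d d \<and> hermitian (t k) \<and> mtrace (t k) = 0"
    and t_orth: "\<forall>k<d-1. \<forall>l<d-1. mtrace (t k * t l) = (if k = l then 1 else 0)"
    and t_comm: "\<forall>k<d-1. \<forall>l<d-1. t k * t l = t l * t k"
    and w_carrier: "\<forall>a<d. w a \<in> carrier_vec d"
    and w_orthonormal: "\<forall>a<d. \<forall>b<d. cinner (w a) (w b) = (if a = b then 1 else 0)"
    and w_eigen: "\<forall>k<d-1. \<forall>a<d. \<exists>c. t k *\<^sub>v w a = c \<cdot>\<^sub>v w a"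
    and f_deriv: "\<forall>j<n. \<forall>x. f j differentiable (at x) \<and> deriv (f j) x > 0"
    and f_range: "\<forall>k<d-1. 0 \<le> (\<Sum>j<n. f j (\<theta> k)) \<and> (\<Sum>j<n. f j (\<theta> k)) \<le> pi"
  shows "\<exists>N M. is_povm d N M \<and>
           (\<forall>m<N. \<forall>j<d-1. (\<lambda>s. outcome_prob (rho_out d n t w f) M m (\<theta>(j := s)))
                               differentiable (at (\<theta> j))) \<and>
           (\<forall>lam. is_SLD d (d-1) (rho_out d n t w f) lam \<theta> \<longrightarrow>
              (\<forall>j<d-1. \<forall>k<d-1.
                 fisher_info (rho_out d n t w f) N M \<theta> j k = sld_info (rho_out d n t w f) lam \<theta> j k))"
proof (cases "d = 1")
  case True
  \<comment> \<open>no parameters: the trivial measurement \<open>{1}\<close> will do\<close>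
  then show ?thesis
    by (intro exI[of _ 1] exI[of _ "\<lambda>_. 1\<^sub>m 1"]) (simp add: is_povm_def psd_one_mat)
next
  case False
  \<comment> \<open>commutativity is implied by the common eigenbasis\<close>
  interpret common_eigenbasis d t w
    using assms by unfold_locales auto
  have d2: "2 \<le> d" using d_pos False by simp
  have df: "\<forall>i<n. \<forall>x. f i differentiable (at x)" using f_deriv by blast
  show ?thesis
  proof (intro exI[of _ "2*(d-1)"] exI[of _ "povm f n \<theta>"] conjI allI impI)
    show "is_povm d (2*(d-1)) (povm f n \<theta>)" by (rule is_povm_povm[OF d2])
    show "(\<lambda>s. outcome_prob (rho_out d n t w f) (povm f n \<theta>) m (\<theta>(j := s))) differentiable (at (\<theta> j))"
      if "m < 2*(d-1)" "j < d-1" for m j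
      using outcome_prob_povm_deriv[OF that] df unfolding real_differentiable_def by blast
    show "fisher_info (rho_out d n t w f) (2*(d-1)) (povm f n \<theta>) \<theta> j k = sld_info (rho_out d n t w f) lam \<theta> j k"
      if "is_SLD d (d-1) (rho_out d n t w f) lam \<theta>" "j < d-1" "k < d-1" for lam j k
      using fisher_info_povm[OF d2 df that(2,3)] sld_info_eq[OF that(1) df that(2,3)] by simp
  qed
qed

end
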